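(* Given a growth control function $g$, a strictly increasing sequence of integers $(p_j)_{j\in\mathbb{N}_0}$ with $p_0=0$ and $\sup_{j\in\mathbb{N}}p_{j+1}/p_j=+\infty$, and $\beta\ge0$, there exists a weight sequence $\boldsymbol{M}^\beta=(M^\beta_p)_p$ with quotients $m^\beta_p=M^\beta_{p+1}/M^\beta_p$ such that: (i) $m^\beta_p\le g(p)(1+p)^\beta$ for all $p\in\mathbb{N}_0$; (ii) $m^\beta_{p_j}=g(p_j)(1+p_j)^\beta$ for all $j\in\mathbb{N}_0$; (iii) $\gamma(\boldsymbol{M}^\beta)=\beta$.
   Context: A growth control function is a strictly increasing function $g\colon[0,\infty)\to[1,\infty)$ with $g(0)=1$ and $\lim_{t\to\infty}g(t)=\infty$. A weight sequence is a sequence $\boldsymbol{M}=(M_p)_{p\in\mathbb{N}_0}$ of positive reals with $M_0=1$, $M_p^2\le M_{p-1}M_{p+1}$ ($p\ge1$) and $m_p=M_{p+1}/M_p\to\infty$. A sequence $(c_p)$ is almost increasing if $c_p\le ac_q$ for all $q\ge p$, some $a>0$; $\gamma(\boldsymbol{M})=\sup\{\mu>0:(m_p/(p+1)^\mu)_p\text{ almost increasing}\}\in[0,\infty]$ (value $0$ for the empty set). *)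

theory Defs
  imports "HOL-Analysis.Analysis" "HOL-Library.Extended_Real"
begin

definition growth_control :: "(real \<Rightarrow> real) \<Rightarrow> bool" where
  "growth_control g \<longleftrightarrow> strict_mono_on {0..} g \<and> (\<forall>t\<ge>0. g t \<ge> 1) \<and> g 0 = 1
     \<and> filterlim g at_top at_top"

definition quot :: "(nat \<Rightarrow> real) \<Rightarrow> nat \<Rightarrow> real" where
  "quot M p = M (Suc p) / M p"

definition weight_sequence :: "(nat \<Rightarrow> real) \<Rightarrow> bool" where
  "weight_sequence M \<longleftrightarrow> (\<forall>p. M p > 0) \<and> M 0 = 1
     \<and> (\<forall>p\<ge>1. (M p)^2 \<le> M (p - 1) * M (Suc p))
     \<and> filterlim (quot M) at_top sequentially"

definition almost_increasing :: "(nat \<Rightarrow> real) \<Rightarrow> bool" where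
  "almost_increasing c \<longleftrightarrow> (\<exists>a>0. \<forall>p q. p \<le> q \<longrightarrow> c p \<le> a * c q)"

definition gamma_index :: "(nat \<Rightarrow> real) \<Rightarrow> ereal" where
  "gamma_index M = (let S = {\<mu>::real. \<mu> > 0 \<and>
        almost_increasing (\<lambda>p. quot M p / (real p + 1) powr \<mu>)}
      in if S = {} then 0 else (SUP \<mu>\<in>S. ereal \<mu>))"

end

theory Submission
  imports Defs
begin

text \<open>Freeze \<open>g\<close> on the blocks \<open>p\<^sub>j \<le> p < p\<^sub>j\<^sub>+\<^sub>1\<close>: take \<open>m\<^sub>p = g(p\<^sub>j) (1 + p)\<^sup>\<beta>\<close> and
  \<open>M\<^sub>p = m\<^sub>0 \<cdots> m\<^sub>p\<^sub>-\<^sub>1\<close>. Since \<open>m\<close> is increasing and unbounded, \<open>M\<close> is a weight sequence,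
  and (i), (ii) hold because \<open>g\<close> is increasing. For \<open>\<mu> \<le> \<beta>\<close> the sequence \<open>m\<^sub>p / (1 + p)\<^sup>\<mu>\<close>
  is increasing. For \<open>\<mu> > \<beta>\<close> it decreases across the block of \<open>p\<^sub>j\<close> by the factor
  \<open>(p\<^sub>j\<^sub>+\<^sub>1 / (1 + p\<^sub>j))\<^sup>\<mu>\<^sup>-\<^sup>\<beta>\<close>, which is unbounded by the assumption on the gaps, so
  it is not almost increasing.\<close>

lemma growth_control_mono:
  assumes "growth_control g" "0 \<le> x" "x \<le> y"
  shows "g x \<le> g y"
  using assms strict_mono_on_leD[of "{0..}" g x y] by (auto simp: growth_control_def)

lemma growth_control_ge_one:
  assumes "growth_control g" "0 \<le> x"
  shows "1 \<le> g x"
  using assms by (simp add: growth_control_def)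

lemma quot_prod:
  assumes "\<And>k. m k \<noteq> 0"
  shows "quot (\<lambda>p. \<Prod>k<p. m k) = m"
  using assms by (auto simp: quot_def fun_eq_iff)

lemma weight_sequence_prod:
  fixes m :: "nat \<Rightarrow> real"
  assumes pos: "\<And>k. m k > 0" and "mono m" and lim: "filterlim m at_top sequentially"
  shows "weight_sequence (\<lambda>p. \<Prod>k<p. m k)"
  unfolding weight_sequence_def quot_prod[OF less_imp_neq[OF pos, symmetric]]
proof (intro conjI allI impI lim)
  show "(\<Prod>k<p. m k) > 0" for p using pos by (simp add: prod_pos)
  show "(\<Prod>k<p. m k)^2 \<le> (\<Prod>k<p - 1. m k) * (\<Prod>k<Suc p. m k)" if p1: "1 \<le> p" for p
  proof -
    obtain n where n: "p = Suc n" using p1 by (cases p) auto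
    have "m n * m n \<le> m n * m (Suc n)"
      using \<open>mono m\<close> pos by (simp add: monoD)
    then have "(\<Prod>k<n. m k) * (\<Prod>k<n. m k) * (m n * m n)
        \<le> (\<Prod>k<n. m k) * (\<Prod>k<n. m k) * (m n * m (Suc n))"
      using pos by (intro mult_left_mono) (simp_all add: prod_nonneg less_imp_le)
    then show ?thesis by (simp add: n power2_eq_square ac_simps)
  qed
qed simp

lemma mono_imp_almost_increasing:
  "mono c \<Longrightarrow> almost_increasing c"
  unfolding almost_increasing_def mono_def by (intro exI[of _ "1::real"]) auto

lemma gamma_index_eqI:
  assumes "\<beta> \<ge> 0"
    and "\<And>\<mu>. \<mu> > 0 \<Longrightarrow> almost_increasing (\<lambda>p. quot M p / (real p + 1) powr \<mu>) \<longleftrightarrow> \<mu> \<le> \<beta>"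
  shows "gamma_index M = ereal \<beta>"
proof -
  have S: "{\<mu>. \<mu> > 0 \<and> almost_increasing (\<lambda>p. quot M p / (real p + 1) powr \<mu>)} = {0<..\<beta>}"
    using assms(2) by auto
  show ?thesis
  proof (cases "\<beta> = 0")
    case True
    then show ?thesis by (simp add: gamma_index_def S zero_ereal_def)
  next
    case False
    with assms(1) have "\<beta> > 0" by simp
    then have "(SUP \<mu>\<in>{0<..\<beta>}. ereal \<mu>) = ereal \<beta>"
      by (intro antisym SUP_least SUP_upper2[of \<beta>]) auto
    with \<open>\<beta> > 0\<close> show ?thesis by (simp add: gamma_index_def S)
  qed
qed

lemma mono_mult_powr:
  fixes h :: "nat \<Rightarrow> real"
  assumes "mono h" "\<And>p. h p \<ge> 0" "\<alpha> \<ge> 0"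
  shows "mono (\<lambda>p. h p * (1 + real p) powr \<alpha>)"
  using assms by (intro monoI mult_mono powr_mono2) (auto simp: monoD)

lemma almost_increasing_div_powr_le:
  fixes h :: "nat \<Rightarrow> real"
  assumes "mono h" "\<And>p. h p \<ge> 0" "\<mu> \<le> \<beta>"
  shows "almost_increasing (\<lambda>p. h p * (1 + real p) powr \<beta> / (real p + 1) powr \<mu>)"
proof -
  have "(\<lambda>p. h p * (1 + real p) powr \<beta> / (real p + 1) powr \<mu>)
      = (\<lambda>p. h p * (1 + real p) powr (\<beta> - \<mu>))"
    by (simp add: fun_eq_iff powr_diff add.commute)
  moreover have "mono (\<lambda>p. h p * (1 + real p) powr (\<beta> - \<mu>))"
    using assms by (intro mono_mult_powr) auto
  ultimately show ?thesis by (simp add: mono_imp_almost_increasing)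
qed

text \<open>With almost increasing constant \<open>a\<close>, a stretch \<open>[p, q]\<close> on which \<open>h\<close> is constant
  forces \<open>((1 + q) / (1 + p)) powr (\<mu> - \<beta>) \<le> a\<close>.\<close>
lemma not_almost_increasing_div_powr_gt:
  fixes h :: "nat \<Rightarrow> real"
  assumes pos: "\<And>p. h p > 0" and "\<beta> < \<mu>"
    and stretches: "\<And>A. \<exists>p q. p \<le> q \<and> h p = h q \<and> A < (1 + real q) / (1 + real p)"
  shows "\<not> almost_increasing (\<lambda>p. h p * (1 + real p) powr \<beta> / (real p + 1) powr \<mu>)"
proof
  define \<delta> where "\<delta> = \<mu> - \<beta>"
  have "\<delta> > 0" using \<open>\<beta> < \<mu>\<close> by (simp add: \<delta>_def)
  have c: "h p * (1 + real p) powr \<beta> / (real p + 1) powr \<mu> = h p / (1 + real p) powr \<delta>" for p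
    by (simp add: \<delta>_def powr_diff add.commute)
  assume "almost_increasing (\<lambda>p. h p * (1 + real p) powr \<beta> / (real p + 1) powr \<mu>)"
  then obtain a where "a > 0" and a: "\<And>p q. p \<le> q \<Longrightarrow> h p / (1 + real p) powr \<delta> \<le> a * (h q / (1 + real q) powr \<delta>)"
    unfolding almost_increasing_def c by blast
  obtain p q where "p \<le> q" "h p = h q" and ratio: "a powr (1 / \<delta>) < (1 + real q) / (1 + real p)"
    using stretches by blast
  have "a = (a powr (1 / \<delta>)) powr \<delta>"
    using \<open>a > 0\<close> \<open>\<delta> > 0\<close> by (simp add: powr_powr)
  also have "\<dots> < ((1 + real q) / (1 + real p)) powr \<delta>"
    using ratio \<open>a > 0\<close> \<open>\<delta> > 0\<close> by (simp add: powr_less_mono2)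
  also have "\<dots> = (1 + real q) powr \<delta> / (1 + real p) powr \<delta>"
    by (simp add: powr_divide)
  also have "\<dots> \<le> a"
    using a[OF \<open>p \<le> q\<close>] pos[of q] \<open>h p = h q\<close> by (simp add: field_simps)
  finally show False by simp
qed

lemma filterlim_mult_powr:
  fixes h :: "nat \<Rightarrow> real"
  assumes "filterlim h at_top sequentially" "\<And>p. h p \<ge> 0" "\<beta> \<ge> 0"
  shows "filterlim (\<lambda>p. h p * (1 + real p) powr \<beta>) at_top sequentially"
proof (rule filterlim_at_top_mono[OF assms(1)])
  have "h p \<le> h p * (1 + real p) powr \<beta>" for p
    using assms(2)[of p] assms(3) by (simp add: ge_one_powr_ge_zero mult_le_cancel_left1)
  then show "\<forall>\<^sub>F p in sequentially. h p \<le> h p * (1 + real p) powr \<beta>"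
    by simp
qed

lemma weight_sequence_prod_mult_powr:
  fixes h :: "nat \<Rightarrow> real"
  assumes "\<And>p. h p > 0" "mono h" "filterlim h at_top sequentially" "\<beta> \<ge> 0"
  shows "weight_sequence (\<lambda>p. \<Prod>k<p. h k * (1 + real k) powr \<beta>)"
  using assms
  by (intro weight_sequence_prod mono_mult_powr filterlim_mult_powr) (auto simp: less_imp_le)

lemma gamma_index_prod_mult_powr:
  fixes h :: "nat \<Rightarrow> real"
  assumes pos: "\<And>p. h p > 0" and "mono h" and "\<beta> \<ge> 0"
    and stretches: "\<And>A. \<exists>p q. p \<le> q \<and> h p = h q \<and> A < (1 + real q) / (1 + real p)"
  shows "gamma_index (\<lambda>p. \<Prod>k<p. h k * (1 + real k) powr \<beta>) = ereal \<beta>"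
proof (rule gamma_index_eqI[OF \<open>\<beta> \<ge> 0\<close>])
  fix \<mu> :: real
  have "quot (\<lambda>p. \<Prod>k<p. h k * (1 + real k) powr \<beta>) = (\<lambda>p. h p * (1 + real p) powr \<beta>)"
    using pos by (intro quot_prod) (simp add: less_imp_neq[symmetric])
  moreover have "almost_increasing (\<lambda>p. h p * (1 + real p) powr \<beta> / (real p + 1) powr \<mu>)"
    if "\<mu> \<le> \<beta>"
    using \<open>mono h\<close> pos that by (intro almost_increasing_div_powr_le) (auto simp: less_imp_le)
  moreover have "\<not> almost_increasing (\<lambda>p. h p * (1 + real p) powr \<beta> / (real p + 1) powr \<mu>)"
    if "\<beta> < \<mu>"
    using pos that stretches by (rule not_almost_increasing_div_powr_gt)
  ultimately show "almost_increasing (\<lambda>p. quot (\<lambda>p. \<Prod>k<p. h k * (1 + real k) powr \<beta>) p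
      / (real p + 1) powr \<mu>) \<longleftrightarrow> \<mu> \<le> \<beta>"
    by fastforce
qed

definition last_index :: "(nat \<Rightarrow> nat) \<Rightarrow> nat \<Rightarrow> nat" where
  "last_index pj p = (GREATEST j. pj j \<le> p)"

context
  fixes pj :: "nat \<Rightarrow> nat"
  assumes pj: "strict_mono pj" "pj 0 = 0"
begin

private lemma index_bounded: "pj j \<le> p \<Longrightarrow> j \<le> p"
  using seq_suble[OF pj(1), of j] by simp

lemma pj_last_index_le: "pj (last_index pj p) \<le> p"
  unfolding last_index_def by (rule GreatestI_nat[of _ 0]) (use pj(2) index_bounded in auto)

lemma le_last_index: "pj j \<le> p \<Longrightarrow> j \<le> last_index pj p"
  unfolding last_index_def by (rule Greatest_le_nat) (use index_bounded in auto)

lemma last_index_eq: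
  assumes "pj j \<le> p" "p < pj (Suc j)"
  shows "last_index pj p = j"
proof -
  have "pj (last_index pj p) < pj (Suc j)"
    using pj_last_index_le[of p] assms(2) by linarith
  then have "last_index pj p < Suc j"
    using strict_mono_less[OF pj(1)] by blast
  with le_last_index[OF assms(1)] show ?thesis by simp
qed

lemma last_index_pj [simp]: "last_index pj (pj j) = j"
  using last_index_eq pj(1) by (simp add: strict_mono_Suc_iff)

lemma mono_last_index: "mono (last_index pj)"
  by (rule monoI) (meson le_last_index order_trans pj_last_index_le)

lemma filterlim_last_index: "filterlim (last_index pj) at_top sequentially"
  unfolding filterlim_at_top
  using le_last_index by (auto simp: eventually_at_top_linorder)

lemma last_index_long_stretches:
  assumes "(SUP j\<in>{1..}. ereal (real (pj (Suc j)) / real (pj j))) = \<infinity>"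
  shows "\<exists>p q. p \<le> q \<and> last_index pj p = last_index pj q \<and> A < (1 + real q) / (1 + real p)"
proof -
  have "ereal (2 * A) < top"
    by (simp add: top_ereal_def)
  then obtain j where "j \<ge> 1" and "ereal (2 * A) < ereal (real (pj (Suc j)) / real (pj j))"
    using assms unfolding top_ereal_def[symmetric] SUP_eq_top_iff by auto
  then have gap: "2 * A < real (pj (Suc j)) / real (pj j)"
    by simp
  have "pj j \<ge> 1"
    using seq_suble[OF pj(1), of j] \<open>j \<ge> 1\<close> by simp
  have "pj j < pj (Suc j)"
    using pj(1) by (simp add: strict_mono_Suc_iff)
  define q where "q = pj (Suc j) - 1"
  have "pj j \<le> q" "q < pj (Suc j)" "1 + real q = real (pj (Suc j))"
    using \<open>pj j < pj (Suc j)\<close> by (auto simp: q_def of_nat_diff)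
  moreover have "A < real (pj (Suc j)) / (2 * real (pj j))"
    using gap by (simp add: field_simps)
  moreover have "real (pj (Suc j)) / (2 * real (pj j)) \<le> real (pj (Suc j)) / (1 + real (pj j))"
    using \<open>pj j \<ge> 1\<close> by (intro divide_left_mono) auto
  ultimately show ?thesis
    by (intro exI[of _ "pj j"] exI[of _ q]) (simp add: last_index_eq)
qed

lemma mono_growth_control_last_index:
  assumes "growth_control g"
  shows "mono (\<lambda>p. g (real (pj (last_index pj p))))"
  using mono_last_index strict_mono_mono[OF pj(1)]
  by (auto intro!: monoI growth_control_mono[OF assms] simp: monoD)

lemma filterlim_growth_control_last_index:
  assumes "growth_control g"
  shows "filterlim (\<lambda>p. g (real (pj (last_index pj p)))) at_top sequentially"
proof (rule filterlim_at_top_mono)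
  show "filterlim (\<lambda>p. g (real (last_index pj p))) at_top sequentially"
    using assms unfolding growth_control_def
    by (metis filterlim_compose filterlim_real_sequentially filterlim_last_index)
  show "\<forall>\<^sub>F p in sequentially. g (real (last_index pj p)) \<le> g (real (pj (last_index pj p)))"
    using seq_suble[OF pj(1)] by (simp add: growth_control_mono[OF assms])
qed

end

theorem theorem4p10:
  fixes g :: "real \<Rightarrow> real" and pj :: "nat \<Rightarrow> nat" and \<beta> :: real
  assumes "growth_control g"
    and "strict_mono pj" and "pj 0 = 0"
    and "(SUP j\<in>{1..}. ereal (real (pj (Suc j)) / real (pj j))) = \<infinity>"
    and "\<beta> \<ge> 0"
  shows "\<exists>M. weight_sequence M
     \<and> (\<forall>p. quot M p \<le> g (real p) * (1 + real p) powr \<beta>)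
     \<and> (\<forall>j. quot M (pj j) = g (real (pj j)) * (1 + real (pj j)) powr \<beta>)
     \<and> gamma_index M = ereal \<beta>"
proof -
  define h where "h p = g (real (pj (last_index pj p)))" for p
  define M where "M p = (\<Prod>k<p. h k * (1 + real k) powr \<beta>)" for p
  have h_pos: "h p > 0" for p
    using growth_control_ge_one[OF assms(1)] by (simp add: h_def less_le_trans[OF zero_less_one])
  have "mono h" "filterlim h at_top sequentially"
    unfolding h_def using assms(1-3)
    by (simp_all add: mono_growth_control_last_index filterlim_growth_control_last_index)
  have stretches: "\<exists>p q. p \<le> q \<and> h p = h q \<and> A < (1 + real q) / (1 + real p)" for A
    using last_index_long_stretches[OF assms(2-4), of A] unfolding h_def by metis
  have quot_M: "quot M p = h p * (1 + real p) powr \<beta>" for p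
    unfolding M_def using h_pos by (subst quot_prod) (simp_all add: less_imp_neq[symmetric])
  show ?thesis
  proof (intro exI[of _ M] conjI allI)
    show "weight_sequence M" "gamma_index M = ereal \<beta>"
      unfolding M_def using h_pos \<open>mono h\<close> \<open>filterlim h at_top sequentially\<close> stretches assms(5)
      by (simp_all add: weight_sequence_prod_mult_powr gamma_index_prod_mult_powr)
    show "quot M p \<le> g (real p) * (1 + real p) powr \<beta>" for p
      using pj_last_index_le[OF assms(2,3)]
      by (simp add: quot_M h_def growth_control_mono[OF assms(1)])
    show "quot M (pj j) = g (real (pj j)) * (1 + real (pj j)) powr \<beta>" for j
      by (simp add: quot_M h_def assms(2,3))
  qed
qed

end
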